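(* Fix an integer $d\ge2$. For any $k\in\mathbb{N}$ and $q\in(0,1)$ there exists $q'<q$ such that the following holds. For every $b'\subseteq\{1,\dots,k+1\}$, with $b=b'\cap\{1,\dots,k\}$, there exists a coupling $(A,B)$ of random subsets $A,B\subseteq[d]_\star$ such that $A\preceq B$ almost surely, $A$ has law $\mathscr{A}_{q,k}(b)$, and $B$ has law $\mathscr{A}_{q',k+1}(b')$.
   Context: $[d]=\{1,\dots,d\}$, $[d]_\star=\bigcup_{n\ge0}[d]^n$ (finite sequences, $[d]^0=\{o\}$ with $o$ the empty sequence), with concatenation $u\cdot v$. For $u\in[d]_\star$, $\mathrm{prog}(u)=\{u\cdot v:v\in[d]_\star\}$ and $\tau_u:\mathrm{prog}(u)\to[d]_\star$ is the shift $\tau_u(u\cdot v)=v$. For $\hat q\in(0,1)$, $m\in\mathbb{N}$ and $c\subseteq\{1,\dots,m\}$, $\mathscr{A}_{\hat q,m}(c)$ denotes the law of the random subset of $\bigcup_{i\in c}[d]^{m-i}$ in which each point is included independently with probability $\hat q$. For $A,B\subseteq[d]_\star$, write $A\preceq B$ if there exist $u,v\in[d]_\star$ with $A\subseteq\mathrm{prog}(u)$ and $\tau_u(A)\subseteq\tau_v(B\cap\mathrm{prog}(v))$. *)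

theory Defs
  imports "HOL-Probability.Probability"
begin

definition words :: "nat \<Rightarrow> nat list set" where
  "words d = {w. set w \<subseteq> {1..d}}"

definition prog :: "nat \<Rightarrow> nat list \<Rightarrow> nat list set" where
  "prog d u = {u @ v | v. v \<in> words d}"

text \<open>The shift tau_u(u . v) = v (only meaningful on prog(u)).\<close>
definition tau :: "nat list \<Rightarrow> nat list \<Rightarrow> nat list" where
  "tau u x = drop (length u) x"

definition preceq :: "nat \<Rightarrow> nat list set \<Rightarrow> nat list set \<Rightarrow> bool" where
  "preceq d A B \<longleftrightarrow> (\<exists>u\<in>words d. \<exists>v\<in>words d.
      A \<subseteq> prog d u \<and> tau u ` A \<subseteq> tau v ` (B \<inter> prog d v))"

definition ground :: "nat \<Rightarrow> nat \<Rightarrow> nat set \<Rightarrow> nat list set" where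
  "ground d m c = (\<Union>i\<in>c. {w \<in> words d. length w = m - i})"

definition Alaw :: "nat \<Rightarrow> real \<Rightarrow> nat \<Rightarrow> nat set \<Rightarrow> nat list set pmf" where
  "Alaw d q m c = map_pmf (\<lambda>f. {w \<in> ground d m c. f w})
      (Pi_pmf (ground d m c) False (\<lambda>_. bernoulli_pmf q))"

end

theory Submission
  imports Defs
begin

text \<open>
  Write G for the ground set of A_{q,k}(b). The ground set of A_{q',k+1}(b') contains the
  disjoint copies 1G and 2G, so the subtrees of B below the children 1 and 2 of the root are
  independent samples of A_{q',k}(b). If the first subtree is all of G (probability
  c = q'^|G|), draw A from a residual law \<mu>, otherwise let A be the second subtree; either
  way A lies inside a subtree of B, whence A \<preceq> B. Then A has law c \<mu> + (1 - c) A_{q',k}(b),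
  and such a \<mu> exists as soon as (1 - c) A_{q',k}(b) \<le> A_{q,k}(b) pointwise. Comparing
  Bernoulli weights this reduces to (1 - q'^N) (1 - q')^N \<le> (1 - q)^N with N = |G|, which
  holds simultaneously for the finitely many possible N once q' < q is close enough to q.
\<close>

lemma pmf_bind_if_atom:
  "pmf (bind_pmf M (\<lambda>s. if s = a then N else M)) x
     = pmf M a * pmf N x + (1 - pmf M a) * pmf M x"
proof -
  have "pmf (bind_pmf M (\<lambda>s. if s = a then N else M)) x
        = (\<integral>s. pmf M x + indicator {a} s * (pmf N x - pmf M x) \<partial>M)"
    unfolding pmf_bind by (intro Bochner_Integration.integral_cong) (auto split: split_indicator)
  also have "\<dots> = pmf M x + pmf M a * (pmf N x - pmf M x)"
    by (subst Bochner_Integration.integral_add)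
       (auto simp: measure_pmf.prob_space measure_pmf_single measure_pmf.integrable_const_bound[of _ 1])
  finally show ?thesis
    by (simp add: algebra_simps)
qed

lemma exists_pmf_residual:
  fixes L M :: "'a pmf"
  assumes "0 < c" and "\<And>x. (1 - c) * pmf M x \<le> pmf L x"
  obtains \<mu> where "\<And>x. pmf L x = c * pmf \<mu> x + (1 - c) * pmf M x"
proof -
  define f where "f x = (pmf L x - (1 - c) * pmf M x) / c" for x
  have nonneg: "0 \<le> f x" for x
    using assms by (simp add: f_def)
  have "(\<integral>x. f x \<partial>count_space UNIV) = (measure L UNIV - (1 - c) * measure M UNIV) / c"
    unfolding f_def integral_pmf[symmetric]
    by (simp add: integrable_pmf)
  also have "\<dots> = 1"
    using assms(1) by simp
  finally have "(\<integral>\<^sup>+x. ennreal (f x) \<partial>count_space UNIV) = 1"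
    using nonneg unfolding f_def
    by (subst nn_integral_eq_integral)
       (auto intro!: integrable_divide integrable_diff integrable_mult_right integrable_pmf)
  then have "\<And>x. pmf (embed_pmf f) x = f x"
    using nonneg by (intro pmf_embed_pmf) auto
  then show ?thesis
    using assms(1) by (intro that[of "embed_pmf f"]) (simp add: f_def)
qed

lemma exists_bind_pmf_if_eq:
  assumes "0 < pmf M a" and "\<And>x. (1 - pmf M a) * pmf M x \<le> pmf L x"
  obtains \<mu> where "bind_pmf M (\<lambda>s. if s = a then \<mu> else M) = L"
proof -
  obtain \<mu> where \<mu>: "\<And>x. pmf L x = pmf M a * pmf \<mu> x + (1 - pmf M a) * pmf M x"
    using exists_pmf_residual[OF assms] by blast
  show ?thesis
    by (intro that[of \<mu>] pmf_eqI) (simp add: pmf_bind_if_atom \<mu>)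
qed

lemma bind_pmf_pair_pmf_if:
  "bind_pmf (pair_pmf L L) (\<lambda>(s, t). if s = a then N else return_pmf t) =
   bind_pmf L (\<lambda>s. if s = a then N else L)"
  unfolding pair_pmf_def bind_assoc_pmf
  by (intro bind_pmf_cong refl) (auto simp: bind_return_pmf bind_return_pmf')

lemma map_pmf_bind_pmf_pair:
  "map_pmf fst (bind_pmf M (\<lambda>y. map_pmf (\<lambda>x. (x, y)) (K y))) = bind_pmf M K"
  "map_pmf snd (bind_pmf M (\<lambda>y. map_pmf (\<lambda>x. (x, y)) (K y))) = M"
  by (simp_all add: map_bind_pmf map_pmf_comp map_pmf_const bind_return_pmf')

lemma map_pmf_pair_Pi_pmf_disjoint:
  assumes "finite A" "A1 \<subseteq> A" "A2 \<subseteq> A" "A1 \<inter> A2 = {}"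
    and "\<And>f f'. (\<And>x. x \<in> A1 \<Longrightarrow> f x = f' x) \<Longrightarrow> g1 f = g1 f'"
    and "\<And>f f'. (\<And>x. x \<in> A2 \<Longrightarrow> f x = f' x) \<Longrightarrow> g2 f = g2 f'"
  shows "map_pmf (\<lambda>f. (g1 f, g2 f)) (Pi_pmf A dflt p)
           = pair_pmf (map_pmf g1 (Pi_pmf A1 dflt p)) (map_pmf g2 (Pi_pmf A2 dflt p))"
proof -
  have fin: "finite A1" "finite A2"
    using assms(1-3) finite_subset by auto
  have "map_pmf (\<lambda>f. (g1 f, g2 f)) (Pi_pmf A dflt p)
        = map_pmf (\<lambda>f. (g1 f, g2 f)) (Pi_pmf (A1 \<union> A2) dflt p)"
    unfolding Pi_pmf_subset[OF assms(1) Un_least[OF assms(2,3)]] map_pmf_comp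
    by (intro map_pmf_cong refl) (auto intro!: arg_cong2[where f = Pair] assms(5,6))
  also have "\<dots> = map_pmf (\<lambda>(f, g). (g1 f, g2 g)) (pair_pmf (Pi_pmf A1 dflt p) (Pi_pmf A2 dflt p))"
    unfolding Pi_pmf_union[OF fin assms(4)] map_pmf_comp
    using assms(4) by (intro map_pmf_cong refl) (auto intro!: arg_cong2[where f = Pair] assms(5,6))
  finally show ?thesis
    by (simp add: map_pair)
qed

lemma finite_ground: "finite (ground d m c)"
proof -
  have "ground d m c \<subseteq> {xs. set xs \<subseteq> {1..d} \<and> length xs \<le> m}"
    by (auto simp: ground_def words_def)
  then show ?thesis
    by (rule finite_subset) (rule finite_lists_length_le, simp)
qed

lemma ground_subset_words: "ground d m c \<subseteq> words d"
  by (auto simp: ground_def)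

lemma ground_mono: "c \<subseteq> c' \<Longrightarrow> ground d m c \<subseteq> ground d m c'"
  by (auto simp: ground_def)

text \<open>The index m + 1 of c contributes only the empty word, which has no parent.\<close>

lemma Cons_mem_ground_Suc:
  "j # w \<in> ground d (Suc m) c \<longleftrightarrow> j \<in> {1..d} \<and> w \<in> ground d m (c \<inter> {..m})"
  unfolding ground_def words_def
  by (auto; (rule_tac x = x in bexI)?) (auto simp: Suc_diff_le)

lemma set_pmf_Alaw: "set_pmf (Alaw d q m c) \<subseteq> Pow (ground d m c)"
  by (auto simp: Alaw_def)

lemma pmf_Alaw:
  assumes "0 < q" "q < 1" "S \<subseteq> ground d m c"
  shows "pmf (Alaw d q m c) S = q ^ card S * (1 - q) ^ (card (ground d m c) - card S)"
proof -
  define G where "G = ground d m c"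
  define M where "M = Pi_pmf G False (\<lambda>_. bernoulli_pmf q)"
  have fin: "finite G" "finite S"
    using finite_ground assms(3) finite_subset unfolding G_def by blast+
  have SG: "S \<subseteq> G"
    using assms(3) by (simp add: G_def)
  have set_M: "set_pmf M = PiE_dflt G False (\<lambda>_. UNIV)"
    unfolding M_def using fin assms(1,2) by (simp add: set_Pi_pmf o_def)
  have inj: "inj_on (\<lambda>f. {w \<in> G. f w}) (set_pmf M)"
    by (rule inj_onI) (auto simp: set_M PiE_dflt_def fun_eq_iff set_eq_iff)
  have "S = {w \<in> G. w \<in> S}"
    using SG by blast
  then have "pmf (Alaw d q m c) S = pmf (map_pmf (\<lambda>f. {w \<in> G. f w}) M) {w \<in> G. w \<in> S}"
    by (simp add: Alaw_def M_def G_def)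
  also have "\<dots> = pmf M (\<lambda>w. w \<in> S)"
    using SG by (intro pmf_map_inj[OF inj]) (auto simp: set_M PiE_dflt_def)
  also have "\<dots> = (\<Prod>x\<in>G. if x \<in> S then q else 1 - q)"
    unfolding M_def using fin SG assms(1,2) by (subst pmf_Pi') (auto intro!: prod.cong)
  also have "\<dots> = q ^ card S * (1 - q) ^ card (G - S)"
    using fin SG by (simp add: prod.If_cases Int_absorb1 Diff_eq)
  finally show ?thesis
    using fin SG by (simp add: G_def card_Diff_subset)
qed

definition subtree :: "nat \<Rightarrow> nat list set \<Rightarrow> nat list set" where
  "subtree j B = {w. j # w \<in> B}"

lemma subtree_Alaw_sample:
  "j \<in> {1..d} \<Longrightarrow>
    subtree j {w \<in> ground d (Suc m) c. f w} = {w \<in> ground d m (c \<inter> {..m}). f (j # w)}"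
  by (auto simp: subtree_def Cons_mem_ground_Suc)

lemma map_pmf_Cons_Pi_pmf_eq_Alaw:
  "map_pmf (\<lambda>f. {w \<in> ground d m c. f (j # w)})
     (Pi_pmf ((#) j ` ground d m c) False (\<lambda>_. bernoulli_pmf r)) = Alaw d r m c"
proof -
  have "Pi_pmf (ground d m c) False (\<lambda>_. bernoulli_pmf r) =
        map_pmf (\<lambda>g. g \<circ> (#) j) (Pi_pmf ((#) j ` ground d m c) False (\<lambda>_. bernoulli_pmf r))"
    by (rule Pi_pmf_bij_betw) (auto simp: finite_ground bij_betw_def inj_on_def)
  then show ?thesis
    by (simp add: Alaw_def map_pmf_comp)
qed

lemma map_pmf_subtrees_Alaw:
  assumes "i \<in> {1..d}" "j \<in> {1..d}" "i \<noteq> j"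
  shows "map_pmf (\<lambda>B. (subtree i B, subtree j B)) (Alaw d r (Suc m) c)
           = pair_pmf (Alaw d r m (c \<inter> {..m})) (Alaw d r m (c \<inter> {..m}))"
proof -
  define G where "G = ground d m (c \<inter> {..m})"
  have sub: "(#) i ` G \<subseteq> ground d (Suc m) c" "(#) j ` G \<subseteq> ground d (Suc m) c"
    using assms(1,2) by (auto simp: G_def Cons_mem_ground_Suc)
  have "map_pmf (\<lambda>B. (subtree i B, subtree j B)) (Alaw d r (Suc m) c)
        = map_pmf (\<lambda>f. ({w \<in> G. f (i # w)}, {w \<in> G. f (j # w)}))
            (Pi_pmf (ground d (Suc m) c) False (\<lambda>_. bernoulli_pmf r))"
    unfolding Alaw_def map_pmf_comp using assms(1,2)
    by (simp add: subtree_Alaw_sample G_def)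
  also have "\<dots> = pair_pmf (Alaw d r m (c \<inter> {..m})) (Alaw d r m (c \<inter> {..m}))"
    using sub assms(3) unfolding G_def
    by (subst map_pmf_pair_Pi_pmf_disjoint[of _ "(#) i ` G" "(#) j ` G"])
       (auto simp: G_def finite_ground map_pmf_Cons_Pi_pmf_eq_Alaw)
  finally show ?thesis .
qed

lemma eventually_at_left_dominated:
  fixes q :: real
  assumes "0 < q" "q < 1"
  shows "eventually (\<lambda>q'. (1 - q' ^ N) * (1 - q') ^ N \<le> (1 - q) ^ N) (at_left q)"
proof (cases "N = 0")
  case False
  have "((\<lambda>x. (1 - x ^ N) * (1 - x) ^ N) \<longlongrightarrow> (1 - q ^ N) * (1 - q) ^ N) (at_left q)"
    by (intro tendsto_intros)
  moreover have "(1 - q ^ N) * (1 - q) ^ N < (1 - q) ^ N"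
    using assms False by (simp add: algebra_simps)
  ultimately show ?thesis
    by (rule order_tendstoD(2)[THEN eventually_mono]) simp
qed simp

lemma binomial_weight_dominated:
  fixes q q' :: real
  assumes "0 < q'" "q' < q" "q < 1" "s \<le> N" "(1 - q' ^ N) * (1 - q') ^ N \<le> (1 - q) ^ N"
  shows "(1 - q' ^ N) * (q' ^ s * (1 - q') ^ (N - s)) \<le> q ^ s * (1 - q) ^ (N - s)"
proof -
  have "(1 - q' ^ N) * (1 - q') ^ (N - s) * (1 - q') ^ s = (1 - q' ^ N) * (1 - q') ^ N"
    using assms(4) by (simp add: power_add[symmetric])
  also have "\<dots> \<le> (1 - q) ^ N"
    by (rule assms(5))
  also have "\<dots> = (1 - q) ^ (N - s) * (1 - q) ^ s"
    using assms(4) by (simp add: power_add[symmetric])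
  also have "\<dots> \<le> (1 - q) ^ (N - s) * (1 - q') ^ s"
    using assms by (intro mult_left_mono power_mono) auto
  finally have "(1 - q' ^ N) * (1 - q') ^ (N - s) \<le> (1 - q) ^ (N - s)"
    using assms by (simp add: mult_le_cancel_right)
  then have "q' ^ s * ((1 - q' ^ N) * (1 - q') ^ (N - s)) \<le> q' ^ s * (1 - q) ^ (N - s)"
    using assms by (intro mult_left_mono) auto
  also have "\<dots> \<le> q ^ s * (1 - q) ^ (N - s)"
    using assms by (intro mult_right_mono power_mono) auto
  finally show ?thesis
    by (simp add: algebra_simps)
qed

lemma Alaw_dominated:
  fixes d m :: nat and c :: "nat set" and q q' :: real
  defines "N \<equiv> card (ground d m c)"
  assumes "0 < q'" "q' < q" "q < 1" "(1 - q' ^ N) * (1 - q') ^ N \<le> (1 - q) ^ N"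
  shows "(1 - pmf (Alaw d q' m c) (ground d m c)) * pmf (Alaw d q' m c) S \<le> pmf (Alaw d q m c) S"
proof (cases "S \<subseteq> ground d m c")
  case True
  then have "card S \<le> N"
    unfolding N_def by (intro card_mono finite_ground)
  with True assms show ?thesis
    by (simp add: pmf_Alaw binomial_weight_dominated)
next
  case False
  then have "pmf (Alaw d q' m c) S = 0"
    using set_pmf_Alaw[of d q' m c] by (auto simp: set_pmf_iff)
  then show ?thesis
    by simp
qed

lemma preceq_if_subset_subtree:
  assumes "j \<in> {1..d}" "B \<subseteq> words d" "A \<subseteq> subtree j B"
  shows "preceq d A B"
  unfolding preceq_def
proof (intro bexI conjI)
  have "A \<subseteq> words d"
    using assms by (force simp: subtree_def words_def)
  then show "A \<subseteq> prog d []"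
    by (auto simp: prog_def)
  have "x \<in> tau [j] ` (B \<inter> prog d [j])" if "x \<in> A" for x
  proof (rule image_eqI)
    show "x = tau [j] (j # x)"
      by (simp add: tau_def)
    show "j # x \<in> B \<inter> prog d [j]"
      using assms that \<open>A \<subseteq> words d\<close> by (auto simp: prog_def subtree_def)
  qed
  moreover have "tau [] ` A = A"
    by (simp add: tau_def)
  ultimately show "tau [] ` A \<subseteq> tau [j] ` (B \<inter> prog d [j])"
    by blast
  show "[] \<in> words d" "[j] \<in> words d"
    using assms(1) by (auto simp: words_def)
qed

lemma Alaw_coupling:
  fixes d k :: nat and c :: "nat set" and q q' :: real
  defines "N \<equiv> card (ground d k (c \<inter> {..k}))"
  assumes "2 \<le> d" "0 < q'" "q' < q" "q < 1" "(1 - q' ^ N) * (1 - q') ^ N \<le> (1 - q) ^ N"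
  shows "\<exists>p. map_pmf fst p = Alaw d q k (c \<inter> {..k}) \<and> map_pmf snd p = Alaw d q' (Suc k) c \<and>
             (\<forall>(A, B) \<in> set_pmf p. preceq d A B)"
proof -
  define G where "G = ground d k (c \<inter> {..k})"
  define Lq where "Lq = Alaw d q k (c \<inter> {..k})"
  define Lr where "Lr = Alaw d q' k (c \<inter> {..k})"
  define Lr' where "Lr' = Alaw d q' (Suc k) c"
  have "0 < pmf Lr G"
    using assms(3-5) by (simp add: Lr_def G_def pmf_Alaw)
  moreover have "(1 - pmf Lr G) * pmf Lr S \<le> pmf Lq S" for S
    using assms(3-6) unfolding Lr_def Lq_def G_def N_def by (rule Alaw_dominated)
  ultimately obtain \<mu> where \<mu>: "bind_pmf Lr (\<lambda>s. if s = G then \<mu> else Lr) = Lq"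
    by (rule exists_bind_pmf_if_eq)
  define sample where
    "sample B = (if subtree 1 B = G then \<mu> else return_pmf (subtree 2 B))" for B
  define p where "p = bind_pmf Lr' (\<lambda>B. map_pmf (\<lambda>A. (A, B)) (sample B))"
  have "map_pmf snd p = Lr'"
    by (simp add: p_def map_pmf_bind_pmf_pair)
  moreover have "map_pmf fst p = Lq"
  proof -
    have "map_pmf fst p = bind_pmf Lr' sample"
      by (simp add: p_def map_pmf_bind_pmf_pair)
    also have "\<dots> = bind_pmf (map_pmf (\<lambda>B. (subtree 1 B, subtree 2 B)) Lr')
                       (\<lambda>(s, t). if s = G then \<mu> else return_pmf t)"
      unfolding sample_def by (simp add: bind_map_pmf)
    also have "\<dots> = bind_pmf Lr (\<lambda>s. if s = G then \<mu> else Lr)"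
      using assms(2) unfolding Lr'_def Lr_def
      by (simp add: map_pmf_subtrees_Alaw bind_pmf_pair_pmf_if)
    finally show ?thesis
      by (simp add: \<mu>)
  qed
  moreover have "preceq d A B" if "(A, B) \<in> set_pmf p" for A B
  proof -
    have B: "B \<in> set_pmf Lr'" and A: "A \<in> set_pmf (sample B)"
      using that by (auto simp: p_def)
    have "B \<subseteq> words d"
      using B set_pmf_Alaw ground_subset_words unfolding Lr'_def by blast
    show ?thesis
    proof (cases "subtree 1 B = G")
      case True
      have "set_pmf \<mu> \<subseteq> set_pmf Lq"
      proof -
        have "G \<in> set_pmf Lr"
          using \<open>0 < pmf Lr G\<close> by (simp add: set_pmf_iff)
        then show ?thesis
          unfolding \<mu>[symmetric] set_bind_pmf by auto
      qed
      then have "A \<subseteq> subtree 1 B"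
        using A True set_pmf_Alaw[of d q k "c \<inter> {..k}"] unfolding sample_def Lq_def G_def
        by auto
      with \<open>B \<subseteq> words d\<close> assms(2) show ?thesis
        by (intro preceq_if_subset_subtree[of 1]) auto
    next
      case False
      with A \<open>B \<subseteq> words d\<close> assms(2) show ?thesis
        by (intro preceq_if_subset_subtree[of 2]) (auto simp: sample_def)
    qed
  qed
  ultimately show ?thesis
    unfolding Lq_def Lr'_def by blast
qed

theorem lemma6:
  fixes d k :: nat and q :: real
  assumes "d \<ge> 2" and "0 < q" and "q < 1"
  shows "\<exists>q'::real. 0 < q' \<and> q' < q \<and>
    (\<forall>b'. b' \<subseteq> {1..k+1} \<longrightarrow>
      (\<exists>p :: (nat list set \<times> nat list set) pmf.
         map_pmf fst p = Alaw d q k (b' \<inter> {1..k}) \<and>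
         map_pmf snd p = Alaw d q' (k+1) b' \<and>
         (\<forall>(A, B) \<in> set_pmf p. preceq d A B)))"
proof -
  define Nmax where "Nmax = card (ground d k {..k})"
  have "eventually (\<lambda>q'. \<forall>N\<in>{..Nmax}. (1 - q' ^ N) * (1 - q') ^ N \<le> (1 - q) ^ N) (at_left q)"
    using assms(2,3) by (intro eventually_ball_finite eventually_at_left_dominated ballI) auto
  moreover have "eventually (\<lambda>q'. 0 < q' \<and> q' < q) (at_left q)"
    using eventually_at_left_real[OF assms(2)] by (rule eventually_mono) simp
  ultimately have "eventually (\<lambda>q'. 0 < q' \<and> q' < q \<and>
      (\<forall>N\<in>{..Nmax}. (1 - q' ^ N) * (1 - q') ^ N \<le> (1 - q) ^ N)) (at_left q)"
    by eventually_elim blast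
  then obtain q' where q': "0 < q'" "q' < q"
    and dominated: "\<forall>N\<in>{..Nmax}. (1 - q' ^ N) * (1 - q') ^ N \<le> (1 - q) ^ N"
    using eventually_happens trivial_limit_at_left_real by blast
  have "\<exists>p. map_pmf fst p = Alaw d q k (b' \<inter> {1..k}) \<and> map_pmf snd p = Alaw d q' (k+1) b' \<and>
            (\<forall>(A, B) \<in> set_pmf p. preceq d A B)" if "b' \<subseteq> {1..k+1}" for b'
  proof -
    have "b' \<inter> {1..k} = b' \<inter> {..k}"
      using that by auto
    moreover have "card (ground d k (b' \<inter> {..k})) \<in> {..Nmax}"
      unfolding Nmax_def by (auto intro!: card_mono finite_ground ground_mono)
    ultimately show ?thesis
      using Alaw_coupling[OF assms(1) q' assms(3) dominated[rule_format]] by simp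
  qed
  with q' show ?thesis
    by blast
qed

end
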